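(* Let $K$ be a positive integer and $\gamma_0,\dots,\gamma_K$ real numbers with $\gamma_0=1$, $\gamma_K\ne0$. Let $\hat{\mathcal H}_n(x)=H_n(x)/(2^nn!)$ for $n\ge0$, $\hat{\mathcal H}_n=0$ for $n<0$, and $q_n(x)=\sum_{j=0}^K\gamma_j\hat{\mathcal H}_{n-j}(x)$ for $n\ge0$. Assume all the zeros of $P(x)=\sum_{j=0}^K\gamma_jx^{K-j}$ are real, and that $N^-$ of them are negative (with multiplicity). Then for $n$ large enough: if $n-K$ is even, $q_n$ has exactly $(n-K)/2+N^-$ negative zeros and exactly $(n-K)/2+K-N^-$ positive zeros; if $n-K$ is odd, $q_n$ has at least $(n-K-1)/2+N^-$ negative zeros and at least $(n-K-1)/2+K-N^-$ positive zeros.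
   Context: $H_n$ denotes the standard (physicists') Hermite polynomial of degree $n$ (orthogonal with respect to $e^{-x^2}$, leading coefficient $2^n$). *)

theory Defs
  imports "HOL-Computational_Algebra.Polynomial" Complex_Main
begin

fun hermite :: "nat \<Rightarrow> real poly" where
  "hermite 0 = 1"
| "hermite (Suc 0) = [:0, 2:]"
| "hermite (Suc (Suc n)) = [:0, 2:] * hermite (Suc n) - smult (2 * real (Suc n)) (hermite n)"

definition hermite_hat :: "int \<Rightarrow> real poly" where
  "hermite_hat m = (if m < 0 then 0
     else smult (1 / (2 ^ nat m * fact (nat m))) (hermite (nat m)))"

definition q_poly :: "nat \<Rightarrow> (nat \<Rightarrow> real) \<Rightarrow> nat \<Rightarrow> real poly" where
  "q_poly K \<gamma> n = (\<Sum>j=0..K. smult (\<gamma> j) (hermite_hat (int n - int j)))"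

definition P_poly :: "nat \<Rightarrow> (nat \<Rightarrow> real) \<Rightarrow> real poly" where
  "P_poly K \<gamma> = (\<Sum>j=0..K. monom (\<gamma> j) (K - j))"

end

(*
  Write D for d/dx and hH m for the normalised Hermite polynomial H_m / (2^m m!). Since
  D (hH m) = hH (m - 1), the polynomial q_n is Gamma(D) (hH n), where Gamma(x) = sum_j gamma_j x^j is
  the reversal of P. Factoring P = prod_i (x - r_i) over its real, nonzero roots turns this into
  q_n = prod_i (1 - r_i D) (hH n).

  For r nonzero, 1 - r D maps a polynomial f with simple real roots to one with simple real roots
  interlacing those of f: at consecutive roots of f the values of f - r f' = - r f' have opposite
  signs, and one more sign change occurs beyond the extreme root of f, on the left if r < 0 and on
  the right if r > 0. So one factor turns m negative roots into m + [r < 0] - 1 or m + [r < 0]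
  negative roots, the former whenever 0 becomes a root. The ambiguity is resolved by parity: if n - k is even,
  then for large n the value at 0 after k factors is dominated by its lowest-order Hermite term
  (prod_i (- r_i)) hH (n - k) (0), whose sign (-1)^((n-k)/2) prod_i sgn (- r_i) determines the parity
  of the number of negative roots. Starting from hH n, which has floor (n/2) negative roots,
  induction over the factors gives the counts.
*)

theory Submission
  imports Defs "HOL-Computational_Algebra.Fundamental_Theorem_Algebra"
begin

lemma degree_diff_eq_left:
  fixes p q :: "'a::ab_group_add poly"
  assumes "degree q < degree p"
  shows "degree (p - q) = degree p" and "lead_coeff (p - q) = lead_coeff p"
proof -
  show deg: "degree (p - q) = degree p"
    using assms by (metis degree_add_eq_left degree_minus diff_conv_add_uminus)
  show "lead_coeff (p - q) = lead_coeff p"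
    using assms by (simp add: deg coeff_eq_0)
qed

lemma
  fixes f :: "'a::{idom, ring_char_0} poly"
  shows degree_diff_smult_pderiv: "degree (f - smult r (pderiv f)) = degree f"
    and lead_coeff_diff_smult_pderiv: "lead_coeff (f - smult r (pderiv f)) = lead_coeff f"
proof -
  have "degree (f - smult r (pderiv f)) = degree f \<and> lead_coeff (f - smult r (pderiv f)) = lead_coeff f"
  proof (cases "degree f = 0")
    case True
    then show ?thesis by (simp add: pderiv_eq_0_iff[THEN iffD2])
  next
    case False
    then have "degree (smult r (pderiv f)) < degree f"
      by (metis degree_pderiv degree_smult_le diff_less le_less_trans neq0_conv zero_less_one)
    from degree_diff_eq_left[OF this] show ?thesis by blast
  qed
  then show "degree (f - smult r (pderiv f)) = degree f"
    and "lead_coeff (f - smult r (pderiv f)) = lead_coeff f" by blast+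
qed

lemma pderiv_sum: "pderiv (sum f A) = (\<Sum>x\<in>A. pderiv (f x))"
  by (induction A rule: infinite_finite_induct) (simp_all add: pderiv_add)

lemma smult_sum_right: "smult a (sum f A) = (\<Sum>x\<in>A. smult a (f x))"
  by (induction A rule: infinite_finite_induct) (simp_all add: smult_add_right)

lemma reflect_poly_linear_factor: "reflect_poly [:a, 1:] = [:1, a :: 'a::comm_ring_1:]"
  by (rule poly_eqI) (auto simp: coeff_reflect_poly coeff_pCons split: nat.splits)

lemma poly_map_poly_of_real: "poly (map_poly of_real p) (of_real x :: complex) = of_real (poly p x)"
  by (induction p) (auto simp: map_poly_pCons)

lemma mult_neg_if_sgn_opposite:
  fixes x y :: real
  shows "sgn x = - sgn y \<Longrightarrow> y \<noteq> 0 \<Longrightarrow> x * y < 0"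
  by (auto simp: sgn_if mult_less_0_iff split: if_splits)

lemma neg_one_power_cong: "(even m \<longleftrightarrow> even n) \<Longrightarrow> (-1) ^ m = ((-1) ^ n :: 'a::ring_1)"
  by (simp add: minus_one_power_iff)

lemma sgn_add_dominated: "\<bar>e\<bar> < \<bar>x\<bar> \<Longrightarrow> sgn (x + e) = sgn (x :: real)"
  by (auto simp: sgn_if)

section \<open>Hermite polynomials\<close>

lemma pderiv_hermite: "pderiv (hermite (Suc n)) = smult (2 * real (Suc n)) (hermite n)"
proof (induction n rule: hermite.induct)
  case (3 n)
  have "pderiv (hermite (Suc (Suc (Suc n))))
      = smult 2 (hermite (Suc (Suc n))) + smult (2 * real (Suc (Suc n)))
          ([:0, 2:] * hermite (Suc n) - smult (2 * real (Suc n)) (hermite n))"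
    unfolding hermite.simps(3)[of "Suc n"] using "3.IH"
    by (simp add: pderiv_mult pderiv_diff pderiv_smult pderiv_pCons smult_diff_right algebra_simps
        del: hermite.simps)
  also have "\<dots> = smult (2 * real (Suc (Suc (Suc n)))) (hermite (Suc (Suc n)))"
    unfolding hermite.simps(3)[of n, symmetric]
    by (simp add: algebra_simps del: hermite.simps flip: smult_add_left)
  finally show ?case .
qed (simp_all add: pderiv_pCons)

lemma hermite_Suc: "hermite (Suc n) = [:0, 2:] * hermite n - pderiv (hermite n)"
  by (cases n) (simp_all add: pderiv_hermite)

lemma degree_hermite [simp]: "degree (hermite n) = n"
  and lead_coeff_hermite [simp]: "coeff (hermite n) n = 2 ^ n"
proof -
  have "degree (hermite n) = n \<and> lead_coeff (hermite n) = 2 ^ n"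
  proof (induction n rule: hermite.induct)
    case (3 n)
    let ?A = "[:0, 2:] * hermite (Suc n)" and ?B = "smult (2 * real (Suc n)) (hermite n)"
    have IH: "degree (hermite (Suc n)) = Suc n" "lead_coeff (hermite (Suc n)) = 2 ^ Suc n"
      "degree (hermite n) = n" using 3 by auto
    then have "hermite (Suc n) \<noteq> 0" by auto
    then have A: "degree ?A = Suc (Suc n)" "lead_coeff ?A = 2 ^ Suc (Suc n)"
      using IH lead_coeff_mult[of "[:0, 2:]" "hermite (Suc n)"]
      by (simp_all add: degree_mult_eq del: mult_pCons_left)
    have "degree ?B < degree ?A" using IH A by simp
    from degree_diff_eq_left[OF this] A show ?case
      unfolding hermite.simps(3) by argo
  qed simp_all
  then show "degree (hermite n) = n" "coeff (hermite n) n = 2 ^ n" by auto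
qed

lemma poly_hermite_minus: "poly (hermite n) (- x) = (-1) ^ n * poly (hermite n) x"
  by (induction n rule: hermite.induct) (simp_all add: algebra_simps)

definition nhermite :: "nat \<Rightarrow> real poly" where
  "nhermite n = smult (1 / (2 ^ n * fact n)) (hermite n)"

lemma hermite_hat_diff: "j \<le> n \<Longrightarrow> hermite_hat (int n - int j) = nhermite (n - j)"
  by (simp add: hermite_hat_def nhermite_def flip: of_nat_diff)

lemma pderiv_nhermite: "pderiv (nhermite (Suc n)) = nhermite n"
proof -
  have "2 * real (Suc n) / (2 ^ Suc n * fact (Suc n)) = 1 / (2 ^ n * fact n)"
    by (simp add: field_simps del: of_nat_Suc)
  then show ?thesis
    by (simp add: nhermite_def pderiv_smult pderiv_hermite del: hermite.simps of_nat_Suc fact_Suc power_Suc)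
qed

lemma higher_pderiv_nhermite: "i \<le> n \<Longrightarrow> (pderiv ^^ i) (nhermite n) = nhermite (n - i)"
proof (induction i)
  case (Suc i)
  then have "n - i = Suc (n - Suc i)" by simp
  with Suc show ?case by (simp add: pderiv_nhermite)
qed simp

lemma degree_nhermite [simp]: "degree (nhermite n) = n"
  and lead_coeff_nhermite [simp]: "coeff (nhermite n) n = 1 / fact n"
  by (simp_all add: nhermite_def)

lemma poly_nhermite_minus: "poly (nhermite n) (- x) = (-1) ^ n * poly (nhermite n) x"
  by (simp add: nhermite_def poly_hermite_minus)

lemma poly_nhermite_0_Suc_Suc:
  "poly (nhermite (Suc (Suc n))) 0 = - poly (nhermite n) 0 / (2 * (real n + 2))"
proof -
  have "poly (hermite (Suc (Suc n))) 0 = - (2 * real (Suc n)) * poly (hermite n) 0"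
    by (simp add: algebra_simps)
  moreover have "(2::real) ^ Suc (Suc n) * fact (Suc (Suc n))
      = 2 * (real n + 2) * (2 * real (Suc n)) * (2 ^ n * fact n)"
    by (simp add: algebra_simps)
  ultimately show ?thesis
    by (simp add: nhermite_def del: hermite.simps fact_Suc power_Suc of_nat_Suc)
qed

lemma poly_nhermite_0_odd: "poly (nhermite (Suc (2 * p))) 0 = 0"
proof (induction p)
  case (Suc p)
  then show ?case using poly_nhermite_0_Suc_Suc[of "Suc (2 * p)"] by simp
qed (simp add: nhermite_def)

lemma sgn_poly_nhermite_0_even: "sgn (poly (nhermite (2 * p)) 0) = (-1) ^ p"
proof (induction p)
  case (Suc p)
  then show ?case using poly_nhermite_0_Suc_Suc[of "2 * p"] by (simp add: sgn_mult sgn_minus)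
qed (simp add: nhermite_def)

lemma poly_nhermite_0_eq_0_iff: "poly (nhermite n) 0 = 0 \<longleftrightarrow> odd n"
proof (cases "even n")
  case True
  then obtain p where "n = 2 * p" by (rule evenE)
  then show ?thesis using sgn_poly_nhermite_0_even[of p] by auto
next
  case False
  then obtain p where "n = Suc (2 * p)" by (metis oddE Suc_eq_plus1)
  then show ?thesis using poly_nhermite_0_odd[of p] by simp
qed

lemma abs_poly_nhermite_0_mono: "\<bar>poly (nhermite (m + 2 * k)) 0\<bar> \<le> \<bar>poly (nhermite m) 0\<bar>"
proof (induction k)
  case (Suc k)
  have "\<bar>poly (nhermite (Suc (Suc (m + 2 * k)))) 0\<bar> \<le> \<bar>poly (nhermite (m + 2 * k)) 0\<bar>"
    unfolding poly_nhermite_0_Suc_Suc by (simp add: abs_div field_simps)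
  with Suc show ?case by simp
qed simp

lemma abs_poly_nhermite_0_tail:
  assumes "0 < j"
  shows "\<bar>poly (nhermite (2 * p + j)) 0\<bar> \<le> \<bar>poly (nhermite (2 * p)) 0\<bar> / (real p + 1)"
proof (cases "even j")
  case True
  then obtain k' where "j = 2 * k'" by (rule evenE)
  with assms obtain k where "j = 2 * Suc k" by (cases k') auto
  then have "\<bar>poly (nhermite (2 * p + j)) 0\<bar> \<le> \<bar>poly (nhermite (Suc (Suc (2 * p)))) 0\<bar>"
    using abs_poly_nhermite_0_mono[of "Suc (Suc (2 * p))" k] by simp
  also have "\<dots> \<le> \<bar>poly (nhermite (2 * p)) 0\<bar> / (real p + 1)"
    unfolding poly_nhermite_0_Suc_Suc by (simp add: abs_div frac_le)
  finally show ?thesis .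
next
  case False
  then obtain k where "j = Suc (2 * k)" by (metis oddE Suc_eq_plus1)
  then show ?thesis using poly_nhermite_0_odd[of "p + k"] by simp
qed

section \<open>Polynomials with simple real roots\<close>

definition simple_real_rooted :: "real poly \<Rightarrow> bool" where
  "simple_real_rooted f \<longleftrightarrow> f \<noteq> 0 \<and> card {x. poly f x = 0} = degree f"

lemma prod_linear_factors_dvd:
  fixes f :: "'a::idom poly"
  assumes "finite S" "\<And>z. z \<in> S \<Longrightarrow> poly f z = 0"
  shows "(\<Prod>z\<in>S. [:-z, 1:]) dvd f"
  using assms
proof (induction S arbitrary: f rule: finite_induct)
  case (insert z S)
  then obtain g where g: "f = [:-z, 1:] * g" by (meson dvdE poly_eq_0_iff_dvd insertI1)
  have "poly g y = 0" if "y \<in> S" for y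
    using insert.prems[of y] insert.hyps(2) that by (auto simp: g)
  then have "(\<Prod>z\<in>S. [:-z, 1:]) dvd g" by (rule insert.IH)
  then have "[:-z, 1:] * (\<Prod>z\<in>S. [:-z, 1:]) dvd [:-z, 1:] * g" by (rule mult_dvd_mono[OF dvd_refl])
  then show ?case by (simp only: prod.insert[OF insert.hyps] g)
qed simp

lemma simple_real_rooted_decompose:
  assumes "simple_real_rooted f"
  shows "f = smult (lead_coeff f) (\<Prod>z | poly f z = 0. [:-z, 1:])"
proof -
  let ?Z = "{z. poly f z = 0}" let ?Q = "\<Prod>z\<in>?Z. [:-z, 1:]"
  have f0: "f \<noteq> 0" and card: "card ?Z = degree f" using assms by (auto simp: simple_real_rooted_def)
  have fin: "finite ?Z" using poly_roots_finite[OF f0] .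
  obtain c where f: "f = ?Q * c" using prod_linear_factors_dvd[OF fin] by blast
  have Q: "?Q \<noteq> 0" "degree ?Q = degree f"
    using fin card by (auto simp: degree_prod_sum_eq)
  have "lead_coeff ?Q = 1" by (simp only: lead_coeff_prod) simp
  have "c \<noteq> 0" using f f0 by auto
  with f Q have "degree c = 0" using degree_mult_eq[of ?Q c] by simp
  then obtain c0 where c: "c = [:c0:]" by (rule degree_eq_zeroE)
  have "lead_coeff f = lead_coeff ?Q * lead_coeff c" using f by (metis lead_coeff_mult)
  with c \<open>lead_coeff ?Q = 1\<close> have "lead_coeff f = c0" by simp
  with f c show ?thesis by simp
qed

lemma sgn_prod_diff:
  fixes a :: real
  assumes "finite S" "a \<notin> S"
  shows "sgn (\<Prod>z\<in>S. a - z) = (-1) ^ card {z\<in>S. a < z}"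
  using assms
proof (induction S rule: finite_induct)
  case (insert z S)
  have "{y \<in> insert z S. a < y} = (if a < z then insert z {y\<in>S. a < y} else {y\<in>S. a < y})"
    by auto
  moreover have "z \<noteq> a" using insert.prems by auto
  ultimately show ?case using insert by (auto simp: sgn_mult card_insert_if)
qed simp

lemma sgn_poly_simple_real_rooted:
  assumes "simple_real_rooted f" "poly f a \<noteq> 0"
  shows "sgn (poly f a) = sgn (lead_coeff f) * (-1) ^ card {z. poly f z = 0 \<and> a < z}"
proof -
  have fin: "finite {z. poly f z = 0}"
    using assms(1) poly_roots_finite by (auto simp: simple_real_rooted_def)
  have "poly f a = lead_coeff f * (\<Prod>z | poly f z = 0. a - z)"
    by (subst simple_real_rooted_decompose[OF assms(1)]) (simp add: poly_prod)
  then show ?thesis using sgn_prod_diff[OF fin, of a] assms(2) by (simp add: sgn_mult)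
qed

lemma sgn_pderiv_simple_real_rooted:
  assumes "simple_real_rooted f" "poly f a = 0"
  shows "sgn (poly (pderiv f) a) = sgn (lead_coeff f) * (-1) ^ card {z. poly f z = 0 \<and> a < z}"
proof -
  let ?Z = "{z. poly f z = 0}"
  have fin: "finite ?Z"
    using assms(1) poly_roots_finite by (auto simp: simple_real_rooted_def)
  define c where "c = lead_coeff f"
  have "(\<Prod>z\<in>?Z. [:-z, 1:]) = [:-a, 1:] * (\<Prod>z\<in>?Z - {a}. [:-z, 1:])"
    by (rule prod.remove[OF fin]) (use assms(2) in simp)
  then have f: "f = smult c ([:-a, 1:] * (\<Prod>z\<in>?Z - {a}. [:-z, 1:]))"
    using simple_real_rooted_decompose[OF assms(1)] unfolding c_def by simp
  have "poly (pderiv f) a = c * (\<Prod>z\<in>?Z - {a}. a - z)"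
    by (subst f) (simp add: pderiv_smult pderiv_mult pderiv_pCons poly_prod del: mult_pCons_left)
  moreover have "{z \<in> ?Z - {a}. a < z} = {z. poly f z = 0 \<and> a < z}" by auto
  ultimately show ?thesis using sgn_prod_diff[of "?Z - {a}" a] fin by (simp add: sgn_mult c_def)
qed

lemma card_roots_le_gt:
  fixes f :: "real poly"
  assumes "f \<noteq> 0"
  shows "card {x. x \<le> a \<and> poly f x = 0} + card {x. a < x \<and> poly f x = 0} = card {x. poly f x = 0}"
proof -
  have "{x. poly f x = 0} = {x. x \<le> a \<and> poly f x = 0} \<union> {x. a < x \<and> poly f x = 0}" by auto
  moreover have "finite {x. poly f x = 0}" using poly_roots_finite[OF assms] .
  ultimately show ?thesis
    by (metis (no_types, lifting) card_Un_disjoint disjoint_iff finite_Un mem_Collect_eq not_le)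
qed

lemma card_roots_le_lt:
  fixes f :: "real poly"
  assumes "f \<noteq> 0"
  shows "card {x. x \<le> a \<and> poly f x = 0} = card {x. x < a \<and> poly f x = 0} + (if poly f a = 0 then 1 else 0)"
proof -
  have "{x. x \<le> a \<and> poly f x = 0} = (if poly f a = 0 then insert a else id) {x. x < a \<and> poly f x = 0}"
    by (auto simp: le_less)
  moreover have "finite {x. x < a \<and> poly f x = 0}" using poly_roots_finite[OF assms] by simp
  ultimately show ?thesis by simp
qed

lemma sgn_poly_0_simple_real_rooted:
  assumes f: "simple_real_rooted f" and "poly f 0 \<noteq> 0"
  shows "sgn (poly f 0) = sgn (lead_coeff f) * (-1) ^ (degree f - card {x. x < 0 \<and> poly f x = 0})"
proof -
  have "f \<noteq> 0" "card {x. poly f x = 0} = degree f" using f by (auto simp: simple_real_rooted_def)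
  then have "card {x. x < 0 \<and> poly f x = 0} + card {x. 0 < x \<and> poly f x = 0} = degree f"
    using card_roots_le_gt[of f 0] card_roots_le_lt[of f 0] assms(2) by simp
  then have "card {z. poly f z = 0 \<and> 0 < z} = degree f - card {x. x < 0 \<and> poly f x = 0}"
    by (simp add: conj_commute)
  then show ?thesis using sgn_poly_simple_real_rooted[OF assms] by simp
qed

lemma eventually_sgn_poly_at_top:
  fixes p :: "real poly"
  shows "eventually (\<lambda>x. sgn (poly p x) = sgn (lead_coeff p)) at_top"
proof -
  have pos: "eventually (\<lambda>x. sgn (poly q x) = sgn (lead_coeff q)) at_top"
    if q: "lead_coeff q > 0" for q :: "real poly"
  proof -
    obtain N where "\<forall>x\<ge>N. lead_coeff q \<le> poly q x" using poly_pinfty_gt_lc[OF q] by blast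
    with q show ?thesis unfolding eventually_at_top_linorder by (intro exI[of _ N]) auto
  qed
  consider "p = 0" | "lead_coeff p > 0" | "lead_coeff (- p) > 0"
    by (metis leading_coeff_0_iff lead_coeff_minus neg_0_less_iff_less linorder_neqE_linordered_idom)
  then show ?thesis
  proof cases
    case 3
    then show ?thesis using pos[OF 3] by (simp add: sgn_minus)
  qed (use pos in auto)
qed

lemma eventually_sgn_poly_at_bot:
  fixes p :: "real poly"
  shows "eventually (\<lambda>x. sgn (poly p x) = (-1) ^ degree p * sgn (lead_coeff p)) at_bot"
proof -
  let ?q = "pcompose p [:0, -1:]"
  have "lead_coeff ?q = (-1) ^ degree p * lead_coeff p"
    by (subst lead_coeff_comp) (auto simp: mult.commute)
  moreover have "eventually (\<lambda>x. sgn (poly ?q (- x)) = sgn (lead_coeff ?q)) at_bot"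
    using eventually_sgn_poly_at_top[of ?q] by (simp add: at_bot_mirror eventually_filtermap)
  ultimately show ?thesis by (simp add: poly_pcompose sgn_mult)
qed

lemma sgn_far_points:
  fixes g :: "real poly" and S :: "real set"
  assumes "finite S"
  obtains u v where "S \<subseteq> {u<..<v}" "u < v"
    and "sgn (poly g u) = (-1) ^ degree g * sgn (lead_coeff g)" and "sgn (poly g v) = sgn (lead_coeff g)"
proof -
  have "eventually (\<lambda>x. (\<forall>y\<in>insert 0 S. x < y) \<and> sgn (poly g x) = (-1) ^ degree g * sgn (lead_coeff g)) at_bot"
    using assms by (intro eventually_conj eventually_sgn_poly_at_bot eventually_ball_finite) auto
  moreover have "eventually (\<lambda>x. (\<forall>y\<in>insert 0 S. y < x) \<and> sgn (poly g x) = sgn (lead_coeff g)) at_top"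
    using assms by (intro eventually_conj eventually_sgn_poly_at_top eventually_ball_finite) auto
  ultimately obtain u v where "\<forall>y\<in>insert 0 S. u < y" "sgn (poly g u) = (-1) ^ degree g * sgn (lead_coeff g)"
    "\<forall>y\<in>insert 0 S. y < v" "sgn (poly g v) = sgn (lead_coeff g)"
    unfolding eventually_at_bot_linorder eventually_at_top_linorder by blast
  then show ?thesis by (intro that[of u v]) auto
qed

lemma card_roots_sign_change:
  fixes g :: "real poly"
  assumes "g \<noteq> 0" "u \<le> w" "w < b" "b \<le> v" "poly g w * poly g b < 0"
  shows "card {x. u < x \<and> x < w \<and> poly g x = 0} + 1 \<le> card {x. u < x \<and> x < v \<and> poly g x = 0}"
proof -
  obtain \<xi> where \<xi>: "w < \<xi>" "\<xi> < b" "poly g \<xi> = 0" using poly_IVT[OF assms(3,5)] by blast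
  have fin: "finite {x. u < x \<and> x < t \<and> poly g x = 0}" for t
    using poly_roots_finite[OF assms(1)] by (rule rev_finite_subset) auto
  have "insert \<xi> {x. u < x \<and> x < w \<and> poly g x = 0} \<subseteq> {x. u < x \<and> x < v \<and> poly g x = 0}"
    using \<xi> assms(2,4) by auto
  from card_mono[OF fin this] show ?thesis using fin \<xi>(1) by simp
qed

lemma card_roots_alternating:
  fixes g :: "real poly"
  assumes "g \<noteq> 0" "finite A" "A \<subseteq> {u..v}" "c \<noteq> 0"
    and "\<And>x. x \<in> A \<Longrightarrow> sgn (poly g x) = c * (-1) ^ card {y\<in>A. x < y}"
  shows "card A \<le> card {x. u < x \<and> x < v \<and> poly g x = 0} + 1"
  using assms(2-5)
proof (induction A arbitrary: c v rule: finite_linorder_max_induct)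
  case (insert b A)
  show ?case
  proof (cases "A = {}")
    case False
    define w where "w = Max A"
    have w: "w \<in> A" "w < b" using insert.hyps False by (auto simp: w_def)
    have "A \<subseteq> {u..w}" using insert.prems(1) insert.hyps(1) by (auto simp: w_def)
    moreover have "sgn (poly g x) = - c * (-1) ^ card {y\<in>A. x < y}" if "x \<in> A" for x
    proof -
      have "{y \<in> insert b A. x < y} = insert b {y\<in>A. x < y}" using that insert.hyps(2) by auto
      then show ?thesis using insert.prems(3)[of x] that insert.hyps by auto
    qed
    ultimately have IH: "card A \<le> card {x. u < x \<and> x < w \<and> poly g x = 0} + 1"
      using insert.IH[of w "- c"] insert.prems(2) by auto
    have above_w: "{y\<in>insert b A. w < y} = {b}" using Max_ge[OF insert.hyps(1)] w by (force simp: w_def)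
    have above_b: "{y\<in>insert b A. b < y} = {}" using insert.hyps(2) by auto
    have sgn_b: "sgn (poly g b) = c" using insert.prems(3)[of b, unfolded above_b] by simp
    have "sgn (poly g w) = - sgn (poly g b)"
      using insert.prems(3)[of w, unfolded above_w] w sgn_b by simp
    then have "poly g w * poly g b < 0"
      by (rule mult_neg_if_sgn_opposite) (use sgn_b insert.prems(2) in auto)
    then have "card {x. u < x \<and> x < w \<and> poly g x = 0} + 1 \<le> card {x. u < x \<and> x < v \<and> poly g x = 0}"
      using card_roots_sign_change[OF assms(1)] w \<open>A \<subseteq> {u..w}\<close> insert.prems(1) by auto
    moreover have "b \<notin> A" using insert.hyps(2) by auto
    ultimately show ?thesis using IH insert.hyps(1) by simp
  qed simp
qed simp

lemma card_roots_alternating_split: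
  fixes g :: "real poly"
  assumes g: "g \<noteq> 0" and E: "finite E" and c: "c \<noteq> 0"
    and sgn: "\<And>x. x \<in> E \<Longrightarrow> sgn (poly g x) = c * (-1) ^ card {y\<in>E. x < y}"
  shows "card {x\<in>E. x < a} \<le> card {x. x < a \<and> poly g x = 0} + 1"
    and "card {x\<in>E. a \<le> x} \<le> card {x. a < x \<and> poly g x = 0} + 1"
proof -
  let ?A = "{x\<in>E. x < a}" and ?B = "{x\<in>E. a \<le> x}"
  have fin: "finite {x. P x \<and> poly g x = 0}" for P
    using poly_roots_finite[OF g] by (rule rev_finite_subset) auto
  have E_sub: "E \<subseteq> {Min E..Max E}" using E by auto
  have "sgn (poly g x) = (c * (-1) ^ card ?B) * (-1) ^ card {y\<in>?A. x < y}" if "x \<in> ?A" for x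
  proof -
    have "{y\<in>E. x < y} = {y\<in>?A. x < y} \<union> ?B" "{y\<in>?A. x < y} \<inter> ?B = {}" using that by auto
    then have "card {y\<in>E. x < y} = card {y\<in>?A. x < y} + card ?B" using E by (simp add: card_Un_disjoint)
    then show ?thesis using sgn[of x] that by (simp add: power_add)
  qed
  then have "card ?A \<le> card {x. Min E < x \<and> x < a \<and> poly g x = 0} + 1"
    by (intro card_roots_alternating[OF g]) (use E c E_sub in auto)
  also have "\<dots> \<le> card {x. x < a \<and> poly g x = 0} + 1"
    by (intro add_right_mono card_mono[OF fin]) auto
  finally show "card ?A \<le> card {x. x < a \<and> poly g x = 0} + 1" .
  have "sgn (poly g x) = c * (-1) ^ card {y\<in>?B. x < y}" if "x \<in> ?B" for x
  proof -
    have "{y\<in>?B. x < y} = {y\<in>E. x < y}" using that by auto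
    then show ?thesis using sgn[of x] that by simp
  qed
  then have "card ?B \<le> card {x. a < x \<and> x < Max E \<and> poly g x = 0} + 1"
    by (intro card_roots_alternating[OF g]) (use E c E_sub in auto)
  also have "\<dots> \<le> card {x. a < x \<and> poly g x = 0} + 1"
    by (intro add_right_mono card_mono[OF fin]) auto
  finally show "card ?B \<le> card {x. a < x \<and> poly g x = 0} + 1" .
qed

lemma simple_real_rooted_if_alternating:
  fixes g :: "real poly"
  assumes g: "g \<noteq> 0" and E: "finite E" "degree g < card E" and c: "c \<noteq> 0"
    and sgn: "\<And>x. x \<in> E \<Longrightarrow> sgn (poly g x) = c * (-1) ^ card {y\<in>E. x < y}"
  shows "simple_real_rooted g"
proof -
  have "{x\<in>E. x < Max E + 1} = E" using Max_ge[OF E(1)] by force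
  then have "card E \<le> card {x. x < Max E + 1 \<and> poly g x = 0} + 1"
    using card_roots_alternating_split(1)[OF g E(1) c sgn, of "Max E + 1"] by simp
  also have "\<dots> \<le> card {x. poly g x = 0} + 1"
    by (intro add_right_mono card_mono) (auto simp: poly_roots_finite g)
  finally show ?thesis
    using E(2) card_poly_roots_bound[OF g] g by (simp add: simple_real_rooted_def)
qed

lemma simple_real_rooted_hermite: "simple_real_rooted (hermite n)"
proof (induction n)
  case 0
  show ?case by (simp add: simple_real_rooted_def)
next
  case (Suc n)
  define Z where "Z = {x. poly (hermite n) x = 0}"
  have fin: "finite Z" and card_Z: "card Z = n"
    using Suc.IH poly_roots_finite by (auto simp: simple_real_rooted_def Z_def)
  have g0: "hermite (Suc n) \<noteq> 0" using degree_hermite[of "Suc n"] by (metis degree_0 nat.distinct(1))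
  obtain u v where "Z \<subseteq> {u<..<v}" "u < v"
    "sgn (poly (hermite (Suc n)) u) = (-1) ^ degree (hermite (Suc n)) * sgn (lead_coeff (hermite (Suc n)))"
    "sgn (poly (hermite (Suc n)) v) = sgn (lead_coeff (hermite (Suc n)))"
    by (rule sgn_far_points[OF fin])
  then have uv: "Z \<subseteq> {u<..<v}" "u < v" "sgn (poly (hermite (Suc n)) u) = (-1) ^ Suc n"
    "sgn (poly (hermite (Suc n)) v) = 1"
    by (simp_all del: hermite.simps power_Suc)
  define E where "E = insert u (insert v Z)"
  have uvZ: "u \<notin> Z" "v \<notin> Z" "u < v" using uv(1,2) by auto
  have sgn_E: "sgn (poly (hermite (Suc n)) x) = 1 * (-1) ^ card {y\<in>E. x < y}" if x: "x \<in> E" for x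
  proof -
    consider "x = u" | "x = v" | "x \<in> Z" using x by (auto simp: E_def)
    then show ?thesis
    proof cases
      case 1
      then have "{y\<in>E. x < y} = insert v Z" using uv(1) uvZ by (auto simp: E_def)
      then show ?thesis using 1 uv(3) uvZ fin card_Z by simp
    next
      case 2
      then have above: "{y\<in>E. x < y} = {}" using uv(1) uvZ by (auto simp: E_def)
      show ?thesis unfolding above using 2 uv(4) by simp
    next
      case 3
      then have "{y\<in>E. x < y} = insert v {z\<in>Z. x < z}" using uv(1) by (auto simp: E_def)
      moreover have "finite {z\<in>Z. x < z}" "v \<notin> {z\<in>Z. x < z}" using fin uvZ by auto
      moreover have "sgn (poly (pderiv (hermite n)) x) = (-1) ^ card {z\<in>Z. x < z}"
        using sgn_pderiv_simple_real_rooted[OF Suc.IH, of x] 3 by (simp add: Z_def)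
      ultimately show ?thesis
        using 3 by (subst hermite_Suc) (simp add: Z_def sgn_minus del: hermite.simps)
    qed
  qed
  have card_E: "degree (hermite (Suc n)) < card E" using fin uvZ card_Z by (simp add: E_def)
  show ?case
    by (rule simple_real_rooted_if_alternating[OF g0 _ card_E one_neq_zero sgn_E]) (simp add: E_def fin)
qed

lemma simple_real_rooted_nhermite: "simple_real_rooted (nhermite n)"
  using simple_real_rooted_hermite[of n] by (simp add: simple_real_rooted_def nhermite_def)

lemma card_neg_roots_nhermite: "card {x. x < 0 \<and> poly (nhermite n) x = 0} = n div 2"
proof -
  let ?neg = "{x. x < 0 \<and> poly (nhermite n) x = 0}"
  have "{x. 0 < x \<and> poly (nhermite n) x = 0} = uminus ` ?neg"
  proof (intro set_eqI iffI)
    fix x assume "x \<in> {x. 0 < x \<and> poly (nhermite n) x = 0}"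
    then show "x \<in> uminus ` ?neg" by (intro image_eqI[of _ _ "- x"]) (auto simp: poly_nhermite_minus)
  qed (auto simp: poly_nhermite_minus)
  then have "card {x. 0 < x \<and> poly (nhermite n) x = 0} = card ?neg"
    by (simp add: card_image)
  moreover have "card {x. x \<le> 0 \<and> poly (nhermite n) x = 0} = card ?neg + (if odd n then 1 else 0)"
    using card_roots_le_lt[of "nhermite n" 0] simple_real_rooted_nhermite[of n]
    by (simp add: simple_real_rooted_def poly_nhermite_0_eq_0_iff)
  moreover have "card {x. x \<le> 0 \<and> poly (nhermite n) x = 0} + card {x. 0 < x \<and> poly (nhermite n) x = 0} = n"
    using card_roots_le_gt[of "nhermite n" 0] simple_real_rooted_nhermite[of n]
    by (simp add: simple_real_rooted_def)
  ultimately show ?thesis by presburger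
qed

lemma diff_smult_pderiv_alternates:
  fixes f :: "real poly"
  assumes f: "simple_real_rooted f" and r: "r \<noteq> 0"
  obtains e where "poly f e \<noteq> 0" "if r < 0 then e < a else a < e"
    "\<forall>x \<in> insert e {x. poly f x = 0}. sgn (poly (f - smult r (pderiv f)) x)
       = sgn (lead_coeff f) * (-1) ^ card {y \<in> insert e {x. poly f x = 0}. x < y}"
proof -
  define Z where "Z = {x. poly f x = 0}"
  let ?g = "f - smult r (pderiv f)"
  have fin: "finite Z" and card_Z: "card Z = degree f"
    using f poly_roots_finite by (auto simp: simple_real_rooted_def Z_def)
  have "finite (insert a Z)" using fin by simp
  then obtain u v where uv: "insert a Z \<subseteq> {u<..<v}" "u < v"
    "sgn (poly ?g u) = (-1) ^ degree ?g * sgn (lead_coeff ?g)" "sgn (poly ?g v) = sgn (lead_coeff ?g)"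
    by (rule sgn_far_points)
  note uv = uv[unfolded lead_coeff_diff_smult_pderiv, unfolded degree_diff_smult_pderiv]
  \<comment> \<open>\<open>e\<close> lies on the side where \<open>f - r f'\<close> gains a root.\<close>
  define e where "e = (if r < 0 then u else v)"
  have e: "e \<notin> Z" using uv(1) by (auto simp: e_def)
  have "sgn (poly ?g x) = sgn (lead_coeff f) * (-1) ^ card {y\<in>insert e Z. x < y}" if x: "x \<in> insert e Z" for x
  proof (cases "x = e")
    case True
    then have "{y\<in>insert e Z. x < y} = (if r < 0 then Z else {})" using uv(1) by (auto simp: e_def)
    then show ?thesis using True uv(3,4) card_Z by (simp add: e_def)
  next
    case False
    then have root: "poly f x = 0" and "u < x" "x < v" using x uv(1) by (auto simp: Z_def)
    then have "{y\<in>insert e Z. x < y} = (if r < 0 then id else insert v) {z. poly f z = 0 \<and> x < z}"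
      by (auto simp: e_def Z_def)
    moreover have "finite {z. poly f z = 0 \<and> x < z}" using fin by (simp add: Z_def)
    moreover have "v \<notin> Z" using uv(1) by auto
    ultimately have "card {y\<in>insert e Z. x < y} = card {z. poly f z = 0 \<and> x < z} + (if r < 0 then 0 else 1)"
      by (auto simp: Z_def)
    moreover have "sgn (poly ?g x) = - sgn r * sgn (poly (pderiv f) x)"
      using root by (simp add: sgn_mult)
    ultimately show ?thesis using sgn_pderiv_simple_real_rooted[OF f root] r
      by (cases "r < 0") (simp_all add: sgn_if)
  qed
  moreover have "if r < 0 then e < a else a < e" using uv(1) by (auto simp: e_def)
  ultimately show ?thesis using that e unfolding Z_def by blast
qed

lemma interlacing_diff_smult_pderiv:
  fixes f :: "real poly"
  assumes f: "simple_real_rooted f" and r: "r \<noteq> 0"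
  defines "g \<equiv> f - smult r (pderiv f)"
  shows "simple_real_rooted g"
    and "card {x. x < a \<and> poly f x = 0} + (if r < 0 then 1 else 0) \<le> card {x. x < a \<and> poly g x = 0} + 1"
    and "card {x. x \<le> a \<and> poly g x = 0} \<le> card {x. x < a \<and> poly f x = 0} + (if r < 0 then 1 else 0)"
proof -
  define Z where "Z = {x. poly f x = 0}"
  have f0: "f \<noteq> 0" and fin: "finite Z" and card_Z: "card Z = degree f"
    using f poly_roots_finite by (auto simp: simple_real_rooted_def Z_def)
  have deg_g: "degree g = degree f" and lc_g: "lead_coeff g = lead_coeff f"
    unfolding g_def by (rule degree_diff_smult_pderiv lead_coeff_diff_smult_pderiv)+
  then have g0: "g \<noteq> 0" using f0 by (metis leading_coeff_0_iff)
  have lc0: "sgn (lead_coeff f) \<noteq> 0" using f0 by (simp add: sgn_zero_iff)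
  obtain e where e: "poly f e \<noteq> 0" "if r < 0 then e < a else a < e"
    and "\<forall>x \<in> insert e Z.
      sgn (poly (f - smult r (pderiv f)) x) = sgn (lead_coeff f) * (-1) ^ card {y \<in> insert e Z. x < y}"
    unfolding Z_def by (rule diff_smult_pderiv_alternates[OF f r, where a = a])
  then have sgn_E: "sgn (poly g x) = sgn (lead_coeff f) * (-1) ^ card {y \<in> insert e Z. x < y}"
    if "x \<in> insert e Z" for x
    using that unfolding g_def by blast
  have "e \<notin> Z" using e(1) by (simp add: Z_def)
  have fin_E: "finite (insert e Z)" and card_E: "card (insert e Z) = degree f + 1"
    using fin \<open>e \<notin> Z\<close> card_Z by simp_all
  show rr: "simple_real_rooted g"
    by (rule simple_real_rooted_if_alternating[OF g0 fin_E _ lc0 sgn_E]) (simp add: card_E deg_g)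
  have "{x\<in>insert e Z. x < a} = (if r < 0 then insert e else id) {x. x < a \<and> poly f x = 0}"
    using e r by (auto simp: Z_def)
  then have "card {x\<in>insert e Z. x < a} = card {x. x < a \<and> poly f x = 0} + (if r < 0 then 1 else 0)"
    using fin \<open>e \<notin> Z\<close> by (simp add: Z_def)
  then show "card {x. x < a \<and> poly f x = 0} + (if r < 0 then 1 else 0) \<le> card {x. x < a \<and> poly g x = 0} + 1"
    using card_roots_alternating_split(1)[OF g0 fin_E lc0 sgn_E, of a] by linarith
  have "{x\<in>insert e Z. a \<le> x} = (if r < 0 then id else insert e) {x\<in>Z. a \<le> x}"
    using e r by (auto simp: Z_def)
  then have "card {x\<in>insert e Z. a \<le> x} = card {x\<in>Z. a \<le> x} + (if r < 0 then 0 else 1)"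
    using \<open>e \<notin> Z\<close> fin by simp
  moreover have "card {x. x < a \<and> poly f x = 0} + card {x\<in>Z. a \<le> x} = degree f"
  proof -
    have "Z = {x. x < a \<and> poly f x = 0} \<union> {x\<in>Z. a \<le> x}" by (auto simp: Z_def)
    then show ?thesis using fin card_Z by (metis (no_types, lifting) card_Un_disjoint disjoint_iff
          finite_Un mem_Collect_eq not_le)
  qed
  moreover have "card {x. x \<le> a \<and> poly g x = 0} + card {x. a < x \<and> poly g x = 0} = degree f"
    using card_roots_le_gt[OF g0, of a] rr deg_g by (simp add: simple_real_rooted_def)
  moreover have "card {x\<in>insert e Z. a \<le> x} \<le> card {x. a < x \<and> poly g x = 0} + 1"
    by (rule card_roots_alternating_split(2)[OF g0 fin_E lc0]) (rule sgn_E)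
  ultimately show "card {x. x \<le> a \<and> poly g x = 0} \<le> card {x. x < a \<and> poly f x = 0} + (if r < 0 then 1 else 0)"
    by (cases "r < 0") auto
qed

section \<open>The operators 1 - r D applied to Hermite polynomials\<close>

definition diff_op :: "'a::idom poly \<Rightarrow> 'a poly \<Rightarrow> 'a poly" where
  "diff_op p f = (\<Sum>i\<le>degree p. smult (coeff p i) ((pderiv ^^ i) f))"

lemma diff_op_eq_sum:
  "degree p \<le> N \<Longrightarrow> diff_op p f = (\<Sum>i\<le>N. smult (coeff p i) ((pderiv ^^ i) f))"
  unfolding diff_op_def by (rule sum.mono_neutral_left) (auto simp: coeff_eq_0)

lemma diff_op_linear_factor:
  "diff_op ([:1, -r:] * p) f = diff_op p f - smult r (pderiv (diff_op p f))"
proof -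
  let ?N = "Suc (degree p)" and ?D = "\<lambda>i. (pderiv ^^ i) f"
  have deg: "degree ([:1, -r:] * p) \<le> ?N"
    by (rule order_trans[OF degree_mult_le]) auto
  have lf: "[:1, -r:] * p = p - smult r (pCons 0 p)" by simp
  have shift: "(\<Sum>i\<le>?N. smult (coeff (pCons 0 p) i) (?D i)) = pderiv (diff_op p f)"
    unfolding sum.atMost_Suc_shift diff_op_def pderiv_sum by (simp add: pderiv_smult)
  have "diff_op ([:1, -r:] * p) f = (\<Sum>i\<le>?N. smult (coeff p i - r * coeff (pCons 0 p) i) (?D i))"
    by (subst diff_op_eq_sum[OF deg]) (simp only: lf coeff_diff coeff_smult)
  also have "\<dots> = (\<Sum>i\<le>?N. smult (coeff p i) (?D i)) - smult r (\<Sum>i\<le>?N. smult (coeff (pCons 0 p) i) (?D i))"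
    by (simp only: smult_diff_left sum_subtractf smult_sum_right smult_smult)
  also have "\<dots> = diff_op p f - smult r (pderiv (diff_op p f))"
    unfolding shift diff_op_eq_sum[of p ?N f, OF le_SucI[OF order_refl], symmetric] ..
  finally show ?thesis .
qed

lemma poly_diff_op: "poly (diff_op p f) x = (\<Sum>i\<le>degree p. coeff p i * poly ((pderiv ^^ i) f) x)"
  by (simp add: diff_op_def poly_sum)

definition q_factored :: "real list \<Rightarrow> nat \<Rightarrow> real poly" where
  "q_factored rs n = diff_op (\<Prod>r\<leftarrow>rs. [:1, -r:]) (nhermite n)"

lemma q_factored_Nil: "q_factored [] n = nhermite n"
  by (simp add: q_factored_def diff_op_def)

lemma q_factored_Cons: "q_factored (r # rs) n = q_factored rs n - smult r (pderiv (q_factored rs n))"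
  by (simp add: q_factored_def diff_op_linear_factor del: mult_pCons_left)

lemma degree_q_factored [simp]: "degree (q_factored rs n) = n"
  by (induction rs) (simp_all add: q_factored_Nil q_factored_Cons degree_diff_smult_pderiv)

lemma lead_coeff_q_factored [simp]: "coeff (q_factored rs n) n = 1 / fact n"
proof -
  have "lead_coeff (q_factored rs n) = 1 / fact n"
  proof (induction rs)
    case (Cons r rs)
    then show ?case unfolding q_factored_Cons lead_coeff_diff_smult_pderiv .
  qed (simp add: q_factored_Nil)
  then show ?thesis by simp
qed

lemma simple_real_rooted_q_factored: "0 \<notin> set rs \<Longrightarrow> simple_real_rooted (q_factored rs n)"
  by (induction rs)
     (auto simp: q_factored_Nil q_factored_Cons simple_real_rooted_nhermite interlacing_diff_smult_pderiv(1))

lemma degree_prod_linear_factors [simp]: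
  "degree (\<Prod>r\<leftarrow>rs. [:1, -r:]) = length (filter (\<lambda>r. r \<noteq> 0) (rs :: real list))"
proof (induction rs)
  case (Cons r rs)
  have "(\<Prod>r\<leftarrow>rs. [:1, -r:]) \<noteq> 0" by (auto simp: prod_list_zero_iff)
  with Cons show ?case by (simp add: degree_mult_eq del: mult_pCons_left)
qed simp

lemma lead_coeff_prod_linear_factors:
  fixes rs :: "real list"
  assumes "0 \<notin> set rs"
  shows "lead_coeff (\<Prod>r\<leftarrow>rs. [:1, -r:]) = (\<Prod>r\<leftarrow>rs. - r)"
  using assms
proof (induction rs)
  case (Cons r rs)
  have "lead_coeff (\<Prod>r\<leftarrow>r # rs. [:1, -r:]) = lead_coeff [:1, -r:] * lead_coeff (\<Prod>r\<leftarrow>rs. [:1, -r:])"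
    by (simp only: list.map prod_list.Cons lead_coeff_mult)
  with Cons show ?case by simp
qed simp

lemma sgn_prod_uminus:
  fixes rs :: "real list"
  assumes "0 \<notin> set rs"
  shows "sgn (\<Prod>r\<leftarrow>rs. - r) = (-1) ^ (length rs + length (filter (\<lambda>r. r < 0) rs))"
  using assms
proof (induction rs)
  case (Cons r rs)
  then have "r \<noteq> 0" by auto
  with Cons show ?case by (cases "r < 0") (simp_all add: sgn_mult sgn_minus sgn_neg sgn_pos)
qed simp

lemma poly_diff_op_nhermite_0:
  fixes Q :: "real poly"
  shows "poly (diff_op Q (nhermite (degree Q + 2 * t))) 0 = coeff Q (degree Q) * poly (nhermite (2 * t)) 0
    + (\<Sum>i<degree Q. coeff Q i * poly (nhermite (2 * t + (degree Q - i))) 0)"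
proof -
  have "poly (diff_op Q (nhermite (degree Q + 2 * t))) 0
      = (\<Sum>i<Suc (degree Q). coeff Q i * poly (nhermite (degree Q + 2 * t - i)) 0)"
    unfolding poly_diff_op lessThan_Suc_atMost by (intro sum.cong refl) (simp add: higher_pderiv_nhermite)
  also have "\<dots> = coeff Q (degree Q) * poly (nhermite (2 * t)) 0
      + (\<Sum>i<degree Q. coeff Q i * poly (nhermite (2 * t + (degree Q - i))) 0)"
    by (simp add: sum.lessThan_Suc add.commute)
  finally show ?thesis .
qed

lemma sgn_poly_diff_op_nhermite_0:
  fixes Q :: "real poly"
  assumes "(\<Sum>i<degree Q. \<bar>coeff Q i\<bar>) < \<bar>lead_coeff Q\<bar> * (real t + 1)"
  shows "sgn (poly (diff_op Q (nhermite (degree Q + 2 * t))) 0) = sgn (lead_coeff Q) * (-1) ^ t"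
proof -
  define L where "L = degree Q"
  define h where "h m = poly (nhermite m) 0" for m
  have h_2t: "sgn (h (2 * t)) = (-1) ^ t" "h (2 * t) \<noteq> 0"
    using sgn_poly_nhermite_0_even[of t] by (auto simp: h_def sgn_zero_iff)
  have "\<bar>\<Sum>i<L. coeff Q i * h (2 * t + (L - i))\<bar> \<le> (\<Sum>i<L. \<bar>coeff Q i\<bar> * (\<bar>h (2 * t)\<bar> / (real t + 1)))"
  proof (rule order_trans[OF sum_abs sum_mono])
    fix i assume "i \<in> {..<L}"
    then show "\<bar>coeff Q i * h (2 * t + (L - i))\<bar> \<le> \<bar>coeff Q i\<bar> * (\<bar>h (2 * t)\<bar> / (real t + 1))"
      unfolding abs_mult h_def
      by (intro mult_left_mono) (use abs_poly_nhermite_0_tail[of "L - i" t] in auto)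
  qed
  also have "\<dots> = (\<Sum>i<L. \<bar>coeff Q i\<bar>) * \<bar>h (2 * t)\<bar> / (real t + 1)"
    by (simp add: sum_distrib_right sum_divide_distrib)
  also have "\<dots> < \<bar>coeff Q L * h (2 * t)\<bar>"
  proof -
    have "(\<Sum>i<L. \<bar>coeff Q i\<bar>) * \<bar>h (2 * t)\<bar> < \<bar>coeff Q L\<bar> * (real t + 1) * \<bar>h (2 * t)\<bar>"
      using assms h_2t by (intro mult_strict_right_mono) (auto simp: L_def)
    then show ?thesis by (simp add: abs_mult pos_divide_less_eq mult_ac)
  qed
  finally have "sgn (coeff Q L * h (2 * t) + (\<Sum>i<L. coeff Q i * h (2 * t + (L - i))))
      = sgn (coeff Q L * h (2 * t))"
    by (rule sgn_add_dominated)
  then show ?thesis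
    using poly_diff_op_nhermite_0[of Q t] h_2t by (simp add: L_def h_def sgn_mult)
qed

lemma eventually_sgn_diff_op_nhermite_0:
  fixes Q :: "real poly"
  shows "\<forall>\<^sub>F n in sequentially. even (n - degree Q) \<longrightarrow>
    sgn (poly (diff_op Q (nhermite n)) 0) = sgn (lead_coeff Q) * (-1) ^ ((n - degree Q) div 2)"
proof (cases "Q = 0")
  case False
  define C where "C = (\<Sum>i<degree Q. \<bar>coeff Q i\<bar>)"
  obtain t0 :: nat where t0: "C / \<bar>lead_coeff Q\<bar> < t0" using reals_Archimedean2 by blast
  show ?thesis
    unfolding eventually_sequentially
  proof (intro exI[of _ "degree Q + 2 * t0"] allI impI)
    fix n assume n: "degree Q + 2 * t0 \<le> n" "even (n - degree Q)"
    define t where "t = (n - degree Q) div 2"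
    have "n = degree Q + 2 * t" "t0 \<le> t" using n by (auto simp: t_def)
    moreover have "C < \<bar>lead_coeff Q\<bar> * (real t + 1)"
    proof -
      have "C < \<bar>lead_coeff Q\<bar> * real t0" using t0 False by (simp add: pos_divide_less_eq mult.commute)
      also have "\<dots> \<le> \<bar>lead_coeff Q\<bar> * real t" using \<open>t0 \<le> t\<close> by (simp add: mult_left_mono)
      finally show ?thesis by (simp add: distrib_left)
    qed
    ultimately show "sgn (poly (diff_op Q (nhermite n)) 0) = sgn (lead_coeff Q) * (-1) ^ ((n - degree Q) div 2)"
      using sgn_poly_diff_op_nhermite_0[of Q t] by (simp add: C_def t_def)
  qed
qed (simp add: diff_op_def)

lemma eventually_sgn_q_factored_0:
  assumes "0 \<notin> set rs"
  shows "\<forall>\<^sub>F n in sequentially. even (n - length rs) \<longrightarrow>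
    sgn (poly (q_factored rs n) 0) = (-1) ^ (length rs + length (filter (\<lambda>r. r < 0) rs) + (n - length rs) div 2)"
proof -
  have deg: "degree (\<Prod>r\<leftarrow>rs. [:1, -r:]) = length rs"
  proof -
    have "filter (\<lambda>r. r \<noteq> 0) rs = rs" using assms by (auto simp: filter_id_conv)
    then show ?thesis by simp
  qed
  show ?thesis
    using eventually_sgn_diff_op_nhermite_0[of "\<Prod>r\<leftarrow>rs. [:1, -r:]"]
    unfolding lead_coeff_prod_linear_factors[OF assms] unfolding deg
    by (simp add: q_factored_def sgn_prod_uminus[OF assms] power_add)
qed

lemma card_neg_roots_eq_if_sgn_0:
  fixes g :: "real poly"
  assumes g: "simple_real_rooted g" and lc: "lead_coeff g > 0" and "k \<le> degree g"
    and sgn: "sgn (poly g 0) = (-1) ^ (degree g - k)"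
    and "k \<le> card {x. x < 0 \<and> poly g x = 0} + 1" "card {x. x < 0 \<and> poly g x = 0} \<le> k + 1"
  shows "card {x. x < 0 \<and> poly g x = 0} = k"
proof -
  let ?m = "card {x. x < 0 \<and> poly g x = 0}"
  have "poly g 0 \<noteq> 0" using sgn by auto
  then have "(-1::real) ^ (degree g - ?m) = (-1) ^ (degree g - k)"
    using sgn_poly_0_simple_real_rooted[OF g] sgn lc by simp
  then have "even (degree g - ?m) \<longleftrightarrow> even (degree g - k)"
    by (auto simp: minus_one_power_iff split: if_splits)
  moreover have "?m \<le> degree g"
  proof -
    have "g \<noteq> 0" using g by (simp add: simple_real_rooted_def)
    then have "?m \<le> card {x. poly g x = 0}"
      by (intro card_mono poly_roots_finite) auto
    also have "\<dots> \<le> degree g" by (rule card_poly_roots_bound) fact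
    finally show ?thesis .
  qed
  ultimately show ?thesis using assms(3,5,6) by presburger
qed

lemma card_neg_roots_diff_smult_pderiv:
  fixes f :: "real poly"
  assumes f: "simple_real_rooted f" and r: "r \<noteq> 0" and lc: "lead_coeff f > 0"
    and bounds: "k \<le> card {x. x < 0 \<and> poly f x = 0}" "card {x. x \<le> 0 \<and> poly f x = 0} \<le> k + 1"
    and deg: "k + (if r < 0 then 1 else 0) \<le> degree f"
    and sgn: "sgn (poly (f - smult r (pderiv f)) 0) = (-1) ^ (degree f - (k + (if r < 0 then 1 else 0)))"
  shows "card {x. x < 0 \<and> poly (f - smult r (pderiv f)) x = 0} = k + (if r < 0 then 1 else 0)"
proof -
  define g where "g = f - smult r (pderiv f)"
  let ?e = "if r < 0 then 1 else 0"
  have g: "simple_real_rooted g" unfolding g_def by (rule interlacing_diff_smult_pderiv(1)[OF f r])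
  have deg_g: "degree g = degree f" and lc_g: "lead_coeff g = lead_coeff f"
    unfolding g_def by (rule degree_diff_smult_pderiv lead_coeff_diff_smult_pderiv)+
  have step: "card {x. x < 0 \<and> poly f x = 0} + ?e \<le> card {x. x < 0 \<and> poly g x = 0} + 1"
    "card {x. x \<le> 0 \<and> poly g x = 0} \<le> card {x. x < 0 \<and> poly f x = 0} + ?e"
    using interlacing_diff_smult_pderiv(2,3)[OF f r, of 0] unfolding g_def by auto
  have le: "card {x. x < 0 \<and> poly p x = 0} \<le> card {x. x \<le> 0 \<and> poly p x = 0}"
    if "simple_real_rooted p" for p
    using card_roots_le_lt[of p 0] that by (simp add: simple_real_rooted_def)
  show ?thesis unfolding g_def[symmetric]
  proof (rule card_neg_roots_eq_if_sgn_0[OF g])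
    show "lead_coeff g > 0" using lc lc_g by simp
    show "k + ?e \<le> degree g" using deg deg_g by simp
    show "sgn (poly g 0) = (-1) ^ (degree g - (k + ?e))" unfolding deg_g unfolding g_def by (rule sgn)
    show "k + ?e \<le> card {x. x < 0 \<and> poly g x = 0} + 1" using step bounds by linarith
    show "card {x. x < 0 \<and> poly g x = 0} \<le> k + ?e + 1" using step bounds le[OF f] le[OF g] by linarith
  qed
qed

lemma q_factored_neg_roots:
  assumes "0 \<notin> set rs"
  shows "\<forall>\<^sub>F n in sequentially.
    (even (n - length rs) \<longrightarrow> poly (q_factored rs n) 0 \<noteq> 0 \<and>
       card {x. x < 0 \<and> poly (q_factored rs n) x = 0}
         = (n - length rs) div 2 + length (filter (\<lambda>r. r < 0) rs)) \<and>
    (odd (n - length rs) \<longrightarrow>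
       (n - length rs) div 2 + length (filter (\<lambda>r. r < 0) rs)
         \<le> card {x. x < 0 \<and> poly (q_factored rs n) x = 0} \<and>
       card {x. x \<le> 0 \<and> poly (q_factored rs n) x = 0}
         \<le> (n - length rs) div 2 + 1 + length (filter (\<lambda>r. r < 0) rs))"
  using assms
proof (induction rs)
  case Nil
  have "card {x. x \<le> 0 \<and> poly (nhermite n) x = 0} = n div 2 + (if odd n then 1 else 0)" for n
    using card_roots_le_lt[of "nhermite n" 0] simple_real_rooted_nhermite[of n]
    by (simp add: simple_real_rooted_def poly_nhermite_0_eq_0_iff card_neg_roots_nhermite)
  then show ?case
    by (intro always_eventually allI) (simp add: q_factored_Nil poly_nhermite_0_eq_0_iff card_neg_roots_nhermite)
next
  case (Cons r rs)
  have r: "r \<noteq> 0" and rs: "0 \<notin> set rs" using Cons.prems by auto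
  let ?L = "length rs" and ?N = "length (filter (\<lambda>r. r < 0) rs)" and ?neg = "if r < 0 then 1 else 0"
  define N' where "N' = length (filter (\<lambda>r. r < 0) (r # rs))"
  have N': "N' = ?N + ?neg" "N' \<le> Suc ?L"
    using length_filter_le[of "\<lambda>r. r < 0" "r # rs"] by (simp_all add: N'_def)
  from Cons.IH[OF rs] eventually_sgn_q_factored_0[OF Cons.prems] eventually_ge_at_top[of "Suc ?L"]
  show ?case
  proof eventually_elim
    case (elim n)
    define f t where "f = q_factored rs n" and "t = (n - ?L) div 2"
    have f: "simple_real_rooted f" and lc: "lead_coeff f > 0"
      using simple_real_rooted_q_factored[OF rs] by (simp_all add: f_def)
    have g: "q_factored (r # rs) n = f - smult r (pderiv f)" by (simp add: f_def q_factored_Cons)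
    show ?case
    proof (cases "even (n - ?L)")
      case True
      then have "odd (n - Suc ?L)" "(n - Suc ?L) div 2 = t - 1" "1 \<le> t"
        using elim(3) unfolding t_def by presburger+
      moreover have "card {x. x < 0 \<and> poly f x = 0} = t + ?N"
        using elim(1) True unfolding f_def t_def by blast
      ultimately show ?thesis using interlacing_diff_smult_pderiv(2,3)[OF f r, of 0] N' by (auto simp: g)
    next
      case False
      then have ev: "even (n - length (r # rs))" and t: "(n - Suc ?L) div 2 = t"
        and n: "n = Suc ?L + 2 * t"
        using elim(3) unfolding t_def by simp_all presburger+
      have "sgn (poly (q_factored (r # rs) n) 0) = (-1) ^ (length (r # rs) + N' + (n - length (r # rs)) div 2)"
        using mp[OF elim(2) ev] unfolding N'_def .
      then have "sgn (poly (f - smult r (pderiv f)) 0) = (-1) ^ (Suc ?L + N' + t)"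
        unfolding g length_Cons t .
      also have "\<dots> = (-1) ^ (n - (t + N'))"
        by (rule neg_one_power_cong) (use n N'(2) in presburger)
      finally have sgn_n: "sgn (poly (f - smult r (pderiv f)) 0) = (-1) ^ (n - (t + N'))" .
      have deg_f: "degree f = n" and k: "t + ?N + ?neg = t + N'"
        using N'(1) by (simp_all add: f_def)
      have sgn: "sgn (poly (f - smult r (pderiv f)) 0) = (-1) ^ (degree f - (t + ?N + ?neg))"
        unfolding deg_f k by (rule sgn_n)
      have "t + ?N \<le> card {x. x < 0 \<and> poly f x = 0}" "card {x. x \<le> 0 \<and> poly f x = 0} \<le> t + 1 + ?N"
        using elim(1) False unfolding f_def t_def by blast+
      moreover have "t + ?N + ?neg \<le> degree f" using deg_f n N' by linarith
      ultimately have "card {x. x < 0 \<and> poly (f - smult r (pderiv f)) x = 0} = t + ?N + ?neg"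
        using card_neg_roots_diff_smult_pderiv[OF f r lc _ _ _ sgn] by simp
      moreover have "poly (f - smult r (pderiv f)) 0 \<noteq> 0" using sgn by auto
      ultimately show ?thesis using ev t N' by (simp add: g)
    qed
  qed
qed

lemma q_factored_root_counts:
  assumes "0 \<notin> set rs"
  shows "\<forall>\<^sub>F n in sequentially.
    (even (n - length rs) \<longrightarrow>
       card {x. x < 0 \<and> poly (q_factored rs n) x = 0} = (n - length rs) div 2 + length (filter (\<lambda>r. r < 0) rs) \<and>
       card {x. x > 0 \<and> poly (q_factored rs n) x = 0}
         = (n - length rs) div 2 + length rs - length (filter (\<lambda>r. r < 0) rs)) \<and>
    (odd (n - length rs) \<longrightarrow>
       card {x. x < 0 \<and> poly (q_factored rs n) x = 0} \<ge> (n - length rs - 1) div 2 + length (filter (\<lambda>r. r < 0) rs) \<and>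
       card {x. x > 0 \<and> poly (q_factored rs n) x = 0}
         \<ge> (n - length rs - 1) div 2 + length rs - length (filter (\<lambda>r. r < 0) rs))"
  using q_factored_neg_roots[OF assms] eventually_ge_at_top[of "length rs"]
proof eventually_elim
  case (elim n)
  let ?q = "q_factored rs n"
  define L N where "L = length rs" and "N = length (filter (\<lambda>r. r < 0) rs)"
  define m z p where "m = card {x. x < 0 \<and> poly ?q x = 0}" and "z = card {x. x \<le> 0 \<and> poly ?q x = 0}"
    and "p = card {x. 0 < x \<and> poly ?q x = 0}"
  have "?q \<noteq> 0" "card {x. poly ?q x = 0} = n"
    using simple_real_rooted_q_factored[OF assms] by (auto simp: simple_real_rooted_def)
  then have total: "z + p = n" and zero: "poly ?q 0 \<noteq> 0 \<Longrightarrow> z = m"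
    using card_roots_le_gt[of ?q 0] card_roots_le_lt[of ?q 0] by (simp_all add: m_def z_def p_def)
  have "N \<le> L" unfolding N_def L_def by (rule length_filter_le)
  define t where "t = (n - L) div 2"
  show ?case
  proof (intro conjI impI)
    assume ev: "even (n - length rs)"
    then have n: "n = L + 2 * t" using elim(2) unfolding t_def L_def by presburger
    from ev elim(1) have "poly ?q 0 \<noteq> 0" "m = t + N" unfolding m_def L_def N_def t_def by blast+
    with zero have "z = m" by blast
    with \<open>m = t + N\<close> total n \<open>N \<le> L\<close> have "p = t + L - N" by linarith
    with \<open>m = t + N\<close> show "card {x. x < 0 \<and> poly ?q x = 0} = (n - length rs) div 2 + length (filter (\<lambda>r. r < 0) rs)"
      "card {x. x > 0 \<and> poly ?q x = 0} = (n - length rs) div 2 + length rs - length (filter (\<lambda>r. r < 0) rs)"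
      by (simp_all add: m_def p_def t_def L_def N_def)
  next
    assume od: "odd (n - length rs)"
    then have n: "n = L + 2 * t + 1" and t: "(n - length rs - 1) div 2 = t"
      using elim(2) unfolding t_def L_def by presburger+
    from od elim(1) have "t + N \<le> m" "z \<le> t + 1 + N" unfolding m_def z_def L_def N_def t_def by blast+
    with total n \<open>N \<le> L\<close> have "t + N \<le> m" "t + L - N \<le> p" by linarith+
    then show "card {x. x < 0 \<and> poly ?q x = 0} \<ge> (n - length rs - 1) div 2 + length (filter (\<lambda>r. r < 0) rs)"
      "card {x. x > 0 \<and> poly ?q x = 0} \<ge> (n - length rs - 1) div 2 + length rs - length (filter (\<lambda>r. r < 0) rs)"
      unfolding t by (simp_all add: m_def p_def L_def N_def)
  qed
qed

lemma real_poly_factor_if_real_roots: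
  fixes p :: "real poly"
  assumes monic: "lead_coeff p = 1"
    and real_roots: "\<forall>z. poly (map_poly complex_of_real p) z = 0 \<longrightarrow> z \<in> \<real>"
  obtains rs where "p = (\<Prod>r\<leftarrow>rs. [:-r, 1:])"
proof -
  let ?pc = "map_poly complex_of_real p"
  obtain zs where zs: "mset zs = proots ?pc" using ex_mset by blast
  have lc: "lead_coeff ?pc = 1" using monic by (simp add: degree_map_poly coeff_map_poly)
  then have pc: "?pc = (\<Prod>z\<leftarrow>zs. [:-z, 1:])"
    using complex_poly_decompose_multiset[of ?pc] zs by (simp add: prod_mset_prod_list[symmetric])
  have "?pc \<noteq> 0" using lc by auto
  then have "\<forall>z\<in>set zs. z \<in> \<real>"
    using real_roots zs by (metis set_count_proots set_mset_mset mem_Collect_eq)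
  then have "poly (\<Prod>z\<leftarrow>zs. [:-z, 1:]) (of_real x) = of_real (poly (\<Prod>r\<leftarrow>map Re zs. [:-r, 1:]) x)" for x
    by (induction zs) (auto simp: Reals_def simp del: mult_pCons_left)
  then have "complex_of_real (poly p x) = complex_of_real (poly (\<Prod>r\<leftarrow>map Re zs. [:-r, 1:]) x)" for x
    by (simp flip: poly_map_poly_of_real pc)
  then have "poly p = poly (\<Prod>r\<leftarrow>map Re zs. [:-r, 1:])" by (simp add: fun_eq_iff)
  then show ?thesis by (intro that[of "map Re zs"]) (simp add: poly_eq_poly_eq_iff)
qed

lemma sum_order_neg_roots_prod:
  fixes rs :: "real list"
  shows "(\<Sum>x\<in>{x. x < 0 \<and> poly (\<Prod>r\<leftarrow>rs. [:-r, 1:]) x = 0}. order x (\<Prod>r\<leftarrow>rs. [:-r, 1:]))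
    = length (filter (\<lambda>r. r < 0) rs)"
proof -
  let ?p = "\<Prod>r\<leftarrow>rs. [:-r, 1:]"
  have p0: "?p \<noteq> 0" by (auto simp: prod_list_zero_iff)
  have "proots ?p = mset rs"
  proof (induction rs)
    case (Cons r rs)
    have "(\<Prod>r\<leftarrow>rs. [:-r, 1:]) \<noteq> 0" by (auto simp: prod_list_zero_iff)
    with Cons show ?case by (simp add: proots_mult del: mult_pCons_left)
  qed simp
  moreover have "count_list rs x = count_list (filter (\<lambda>r. r < 0) rs) x" if "x < 0" for x
    using that by (induction rs) auto
  ultimately have "order x ?p = count_list (filter (\<lambda>r. r < 0) rs) x" if "x < 0" for x
    using count_proots[OF p0, of x] that by (simp add: count_mset)
  moreover have "poly ?p x = 0 \<longleftrightarrow> x \<in> set rs" for x by (induction rs) auto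
  then have "{x. x < 0 \<and> poly ?p x = 0} = set (filter (\<lambda>r. r < 0) rs)" by auto
  ultimately show ?thesis by (simp add: sum_count_set)
qed

lemma coeff_P_poly: "coeff (P_poly K \<gamma>) i = (if i \<le> K then \<gamma> (K - i) else 0)"
proof -
  have "coeff (P_poly K \<gamma>) i = (\<Sum>j\<in>{0..K}. if j = K - i \<and> i \<le> K then \<gamma> j else 0)"
    unfolding P_poly_def coeff_sum coeff_monom by (intro sum.cong) auto
  then show ?thesis by simp
qed

lemma degree_P_poly: "\<gamma> 0 \<noteq> 0 \<Longrightarrow> degree (P_poly K \<gamma>) = K"
  by (intro antisym degree_le le_degree) (auto simp: coeff_P_poly)

lemma q_poly_eq_diff_op:
  assumes "\<gamma> 0 \<noteq> 0" "K \<le> n"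
  shows "q_poly K \<gamma> n = diff_op (reflect_poly (P_poly K \<gamma>)) (nhermite n)"
proof -
  have "degree (reflect_poly (P_poly K \<gamma>)) \<le> K"
    using degree_reflect_poly_le[of "P_poly K \<gamma>"] degree_P_poly[of \<gamma> K, OF assms(1)] by simp
  then have "diff_op (reflect_poly (P_poly K \<gamma>)) (nhermite n)
      = (\<Sum>j\<le>K. smult (coeff (reflect_poly (P_poly K \<gamma>)) j) ((pderiv ^^ j) (nhermite n)))"
    by (rule diff_op_eq_sum)
  also have "\<dots> = q_poly K \<gamma> n"
    unfolding q_poly_def atLeast0AtMost using assms
    by (intro sum.cong refl)
       (auto simp: coeff_reflect_poly degree_P_poly coeff_P_poly higher_pderiv_nhermite hermite_hat_diff)
  finally show ?thesis ..
qed

lemma P_poly_factorization: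
  assumes "\<gamma> 0 = 1" and "\<gamma> K \<noteq> 0"
    and real_roots: "\<forall>z. poly (map_poly complex_of_real (P_poly K \<gamma>)) z = 0 \<longrightarrow> z \<in> \<real>"
  obtains rs where "0 \<notin> set rs" "length rs = K"
    "(\<Sum>x\<in>{x. x < 0 \<and> poly (P_poly K \<gamma>) x = 0}. order x (P_poly K \<gamma>)) = length (filter (\<lambda>r. r < 0) rs)"
    "\<forall>n\<ge>K. q_poly K \<gamma> n = q_factored rs n"
proof -
  have lc: "lead_coeff (P_poly K \<gamma>) = 1"
    using assms(1) by (simp add: degree_P_poly coeff_P_poly)
  obtain rs where P: "P_poly K \<gamma> = (\<Prod>r\<leftarrow>rs. [:-r, 1:])"
    using real_poly_factor_if_real_roots[OF lc real_roots] by blast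
  have "poly (P_poly K \<gamma>) 0 \<noteq> 0" using assms(2) by (simp add: poly_0_coeff_0 coeff_P_poly)
  then have rs0: "0 \<notin> set rs" unfolding P by (induction rs) auto
  have reflect: "reflect_poly (P_poly K \<gamma>) = (\<Prod>r\<leftarrow>rs. [:1, -r:])"
    unfolding P by (simp add: reflect_poly_prod_list comp_def reflect_poly_linear_factor)
  have "filter (\<lambda>r. r \<noteq> 0) rs = rs" using rs0 by (auto simp: filter_id_conv)
  then have "length rs = K"
    using degree_reflect_poly_eq[of "P_poly K \<gamma>"] degree_P_poly[of \<gamma> K] assms(1,2) reflect
    by (simp add: coeff_P_poly)
  moreover have "\<forall>n\<ge>K. q_poly K \<gamma> n = q_factored rs n"
    using q_poly_eq_diff_op[of \<gamma> K] assms(1) by (simp add: reflect q_factored_def)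
  ultimately show ?thesis
    using that[OF rs0] sum_order_neg_roots_prod[of rs] unfolding P by blast
qed

theorem corollary5p5:
  fixes K :: nat and \<gamma> :: "nat \<Rightarrow> real" and Nneg :: nat
  assumes "K > 0" and "\<gamma> 0 = 1" and "\<gamma> K \<noteq> 0"
    and "\<forall>z::complex. poly (map_poly complex_of_real (P_poly K \<gamma>)) z = 0 \<longrightarrow> z \<in> \<real>"
    and "Nneg = (\<Sum>x\<in>{x::real. x < 0 \<and> poly (P_poly K \<gamma>) x = 0}. order x (P_poly K \<gamma>))"
  shows "\<exists>n0. \<forall>n\<ge>n0.
    (even (n - K) \<longrightarrow>
       card {x::real. x < 0 \<and> poly (q_poly K \<gamma> n) x = 0} = (n - K) div 2 + Nneg \<and>
       card {x::real. x > 0 \<and> poly (q_poly K \<gamma> n) x = 0} = (n - K) div 2 + K - Nneg) \<and>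
    (odd (n - K) \<longrightarrow>
       card {x::real. x < 0 \<and> poly (q_poly K \<gamma> n) x = 0} \<ge> (n - K - 1) div 2 + Nneg \<and>
       card {x::real. x > 0 \<and> poly (q_poly K \<gamma> n) x = 0} \<ge> (n - K - 1) div 2 + K - Nneg)"
proof -
  obtain rs where rs0: "0 \<notin> set rs" and len: "length rs = K"
    and Nneg: "Nneg = length (filter (\<lambda>r. r < 0) rs)" and q: "\<forall>n\<ge>K. q_poly K \<gamma> n = q_factored rs n"
    using P_poly_factorization[OF assms(2-4)] assms(5) by metis
  show ?thesis
    unfolding eventually_sequentially[symmetric]
    using q_factored_root_counts[OF rs0] eventually_ge_at_top[of K]
  proof eventually_elim
    case (elim n)
    then show ?case using q len Nneg by simp
  qed
qed

end
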